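(* Let $G=(V,E)$ be a connected graph with positive edge costs $c:E\to\mathbb{R}_+$, let $\alpha\ge1$, and let $(U,\complement{U})$ be an $\alpha$-approximate minimum cut of $G$. Let $\mathcal{C}=\{Q\subsetneq V:\complement{U}\subsetneq Q,\ d(Q)\le d(U)\}$ and suppose $\mathcal{C}\ne\emptyset$. Let $S\subseteq U$ be a minimal (with respect to inclusion) set such that $S\cap Q\ne\emptyset$ for all $Q\in\mathcal{C}$. Then $|S|\le\lfloor 2\alpha\rfloor+1$.
   Context: A cut is a partition of $V$ into two non-empty parts; for $\emptyset\ne U\subsetneq V$ write $\complement{U}=V\setminus U$ and $d(U)$ for the total cost of edges with exactly one endpoint in $U$. Let $\lambda=\min\{d(U):\emptyset\ne U\subsetneq V\}$; $(U,\complement{U})$ is an $\alpha$-approximate minimum cut if $d(U)\le\alpha\lambda$. *)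

theory Defs
  imports Complex_Main
begin

definition graph :: "'a set \<Rightarrow> 'a set set \<Rightarrow> bool" where
  "graph V E \<longleftrightarrow> finite V \<and> (\<forall>e\<in>E. e \<subseteq> V \<and> card e = 2)"

definition adj :: "'a set set \<Rightarrow> ('a \<times> 'a) set" where
  "adj E = {(u, v). {u, v} \<in> E}"

definition connected_graph :: "'a set \<Rightarrow> 'a set set \<Rightarrow> bool" where
  "connected_graph V E \<longleftrightarrow> graph V E \<and> (\<forall>u\<in>V. \<forall>v\<in>V. (u, v) \<in> (adj E)\<^sup>*)"

definition cut_cost :: "'a set set \<Rightarrow> ('a set \<Rightarrow> real) \<Rightarrow> 'a set \<Rightarrow> real" where
  "cut_cost E c U = (\<Sum>e\<in>{e\<in>E. card (e \<inter> U) = 1}. c e)"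

definition min_cut_value :: "'a set \<Rightarrow> 'a set set \<Rightarrow> ('a set \<Rightarrow> real) \<Rightarrow> real" where
  "min_cut_value V E c = Min {cut_cost E c U | U. U \<noteq> {} \<and> U \<subset> V}"

definition approx_min_cut :: "'a set \<Rightarrow> 'a set set \<Rightarrow> ('a set \<Rightarrow> real) \<Rightarrow> real \<Rightarrow> 'a set \<Rightarrow> bool" where
  "approx_min_cut V E c \<alpha> U \<longleftrightarrow> U \<noteq> {} \<and> U \<subset> V \<and> cut_cost E c U \<le> \<alpha> * min_cut_value V E c"

end

theory Submission
  imports Defs
begin

(*
  By minimality, every s \<in> S has some Q s \<in> C with S \<inter> Q s = {s}. For a vertex w let
  P w = {t \<in> S. w \<in> Q t}. Each exclusive part {w. P w = {s}} contains s and lies in Q s, so its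
  cut value is at least \<lambda>. For 3 \<le> j \<le> k = |S|, the coverage level {w. j \<le> |P w|} contains V - U
  (where P w = S) and misses S (where P w is a singleton), so by the definition of C it is
  V - U or has cut value above d(U). Counting edge by edge, these 2k - 2 cuts cost at most the
  k cuts d(Q s) \<le> d(U), hence k \<lambda> + (k - 2) d(U) \<le> k d(U), i.e. k \<lambda> \<le> 2 d(U) \<le> 2 \<alpha> \<lambda>.
  So in fact |S| \<le> 2 \<alpha>.
*)

lemma Collect_singleton_eq: "{s. P = {s}} = (if card P = 1 then {the_elem P} else {})"
  by (auto simp: card_1_singleton_iff)

lemma card_singleton_flips_le:
  "card {s. (P = {s}) \<noteq> (R = {s})} \<le> (if card P = 1 then 1 else 0) + (if card R = 1 then 1 else 0)"
proof -
  have "card {s. (P = {s}) \<noteq> (R = {s})} \<le> card ({s. P = {s}} \<union> {s. R = {s}})"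
    by (rule card_mono) (auto simp: Collect_singleton_eq)
  also have "\<dots> \<le> card {s. P = {s}} + card {s. R = {s}}"
    by (rule card_Un_le)
  also have "\<dots> = (if card P = 1 then 1 else 0) + (if card R = 1 then 1 else 0)"
    unfolding Collect_singleton_eq by simp
  finally show ?thesis .
qed

lemma card_level_flips_le:
  assumes "a \<le> b"
  shows "card {j\<in>{3..n}. (j \<le> a) \<noteq> (j \<le> b)} \<le> b - max a 2"
proof -
  have "{j\<in>{3..n}. (j \<le> a) \<noteq> (j \<le> b)} \<subseteq> {Suc (max a 2)..b}"
    using assms by auto
  then show ?thesis
    using card_mono[of "{Suc (max a 2)..b}"] by fastforce
qed

lemma card_flips_le_card_sym_diff_of_card_le:
  assumes "finite P" "finite R" "card P \<le> card R"
  shows "card {s. (P = {s}) \<noteq> (R = {s})} + card {j\<in>{3..n}. (j \<le> card P) \<noteq> (j \<le> card R)}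
    \<le> card (sym_diff P R)"
proof -
  have card_sym_diff: "card (sym_diff P R) = card (P - R) + card (R - P)"
    using assms by (intro card_Un_disjoint) auto
  consider "P = R" | "P \<noteq> R" "card P = card R" | "card P < card R"
    using assms(3) by linarith
  then show ?thesis
  proof cases
    case 1
    then show ?thesis by simp
  next
    case 2
    have "P - R \<noteq> {}" "R - P \<noteq> {}"
      using 2 assms card_subset_eq[of R P] card_subset_eq[of P R] by auto
    then have "card (P - R) \<ge> 1" "card (R - P) \<ge> 1"
      using assms by (simp_all add: Suc_le_eq card_gt_0_iff)
    moreover have "card {s. (P = {s}) \<noteq> (R = {s})} \<le> 2"
      using card_singleton_flips_le[of P R] by (simp split: if_splits)
    moreover have "card {j\<in>{3..n}. (j \<le> card P) \<noteq> (j \<le> card R)} = 0"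
      using 2 by simp
    ultimately show ?thesis
      using card_sym_diff by linarith
  next
    case 3
    have "card R - card P \<le> card (R - P)"
      using assms by (simp add: diff_card_le_card_Diff)
    moreover have "(if card P = 1 then 1 else 0) + (if card R = 1 then 1 else 0)
        + (card R - max (card P) 2) \<le> card R - card P"
      using 3 by (simp add: max_def; presburger)
    ultimately show ?thesis
      using card_sym_diff card_singleton_flips_le[of P R] card_level_flips_le[of "card P" "card R" n] 3
      by linarith
  qed
qed

(* The levels must start at 3: an edge from a vertex covered by {s} to one covered by {s, t}
   crosses the exclusive part of s and level 2, but only the set Q t. *)
lemma card_flips_le_card_sym_diff:
  assumes "finite P" "finite R"
  shows "card {s. (P = {s}) \<noteq> (R = {s})} + card {j\<in>{3..n}. (j \<le> card P) \<noteq> (j \<le> card R)}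
    \<le> card (sym_diff P R)"
proof (cases "card P \<le> card R")
  case True
  then show ?thesis using card_flips_le_card_sym_diff_of_card_le assms by blast
next
  case False
  have "{s. (R = {s}) \<noteq> (P = {s})} = {s. (P = {s}) \<noteq> (R = {s})}"
    "{j\<in>{3..n}. (j \<le> card R) \<noteq> (j \<le> card P)} = {j\<in>{3..n}. (j \<le> card P) \<noteq> (j \<le> card R)}"
    "sym_diff R P = sym_diff P R"
    by blast+
  then show ?thesis
    using False card_flips_le_card_sym_diff_of_card_le[of R P n] assms by simp
qed

lemma card_doubleton_Int_eq_1_iff:
  "u \<noteq> v \<Longrightarrow> card ({u, v} \<inter> X) = 1 \<longleftrightarrow> (u \<in> X) \<noteq> (v \<in> X)"
  by (cases "u \<in> X"; cases "v \<in> X") auto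

lemma graph_finite_edges: "graph V E \<Longrightarrow> finite E"
  unfolding graph_def by (meson Pow_iff finite_Pow_iff finite_subset subsetI)

lemma graph_edgeE:
  assumes "graph V E" "e \<in> E"
  obtains u v where "u \<noteq> v" "e = {u, v}" "u \<in> V" "v \<in> V"
  using assms unfolding graph_def by (metis card_2_iff insert_subset)

lemma cut_cost_nonneg: "\<forall>e\<in>E. 0 \<le> c e \<Longrightarrow> 0 \<le> cut_cost E c X"
  unfolding cut_cost_def by (auto intro: sum_nonneg)

lemma cut_cost_complement:
  assumes "graph V E"
  shows "cut_cost E c (V - X) = cut_cost E c X"
proof -
  have "card (e \<inter> (V - X)) = 1 \<longleftrightarrow> card (e \<inter> X) = 1" if "e \<in> E" for e
  proof -
    obtain u v where "u \<noteq> v" "e = {u, v}" "u \<in> V" "v \<in> V"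
      using graph_edgeE[OF assms \<open>e \<in> E\<close>] .
    then show ?thesis
      using card_doubleton_Int_eq_1_iff[of u v X] card_doubleton_Int_eq_1_iff[of u v "V - X"] by auto
  qed
  then show ?thesis
    unfolding cut_cost_def by (metis (mono_tags, lifting) Collect_cong)
qed

lemma cut_cost_pos:
  assumes "connected_graph V E" "\<forall>e\<in>E. c e > 0" "X \<noteq> {}" "X \<subset> V"
  shows "cut_cost E c X > 0"
proof -
  have graph: "graph V E"
    using assms(1) unfolding connected_graph_def by simp
  obtain x y where "x \<in> X" "y \<in> V - X"
    using assms(3,4) by blast
  then have "y \<in> (adj E)\<^sup>* `` X" "y \<notin> X"
    using assms(1,4) unfolding connected_graph_def by blast+
  then have "\<not> adj E `` X \<subseteq> X"
    using Image_closed_trancl by blast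
  then obtain a b where "{a, b} \<in> E" "a \<in> X" "b \<notin> X"
    unfolding adj_def by blast
  then have crossing: "{a, b} \<in> {e\<in>E. card (e \<inter> X) = 1}"
    by (auto simp: card_doubleton_Int_eq_1_iff)
  have "0 < c {a, b}"
    using assms(2) \<open>{a, b} \<in> E\<close> by blast
  also have "\<dots> \<le> cut_cost E c X"
    unfolding cut_cost_def using crossing assms(2) graph_finite_edges[OF graph]
    by (intro member_le_sum) (auto intro: less_imp_le)
  finally show ?thesis .
qed

lemma finite_cut_costs:
  assumes "graph V E"
  shows "finite {cut_cost E c U | U. U \<noteq> {} \<and> U \<subset> V}"
proof -
  have "finite {U. U \<noteq> {} \<and> U \<subset> V}"
    using assms unfolding graph_def by (auto intro: finite_subset[of _ "Pow V"])
  then show ?thesis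
    by (simp add: Setcompr_eq_image)
qed

lemma min_cut_value_le:
  "graph V E \<Longrightarrow> X \<noteq> {} \<Longrightarrow> X \<subset> V \<Longrightarrow> min_cut_value V E c \<le> cut_cost E c X"
  unfolding min_cut_value_def by (rule Min_le[OF finite_cut_costs]) blast+

lemma min_cut_value_pos:
  assumes "connected_graph V E" "\<forall>e\<in>E. c e > 0" "X \<noteq> {}" "X \<subset> V"
  shows "min_cut_value V E c > 0"
proof -
  have "finite {cut_cost E c U | U. U \<noteq> {} \<and> U \<subset> V}"
    using assms(1) unfolding connected_graph_def by (simp add: finite_cut_costs)
  moreover have "{cut_cost E c U | U. U \<noteq> {} \<and> U \<subset> V} \<noteq> {}"
    using assms(3,4) by blast
  ultimately have "min_cut_value V E c \<in> {cut_cost E c U | U. U \<noteq> {} \<and> U \<subset> V}"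
    unfolding min_cut_value_def by (rule Min_in)
  then obtain U where "U \<noteq> {}" "U \<subset> V" "min_cut_value V E c = cut_cost E c U"
    by blast
  then show ?thesis
    using cut_cost_pos[OF assms(1,2)] by simp
qed

lemma sum_cut_cost_eq:
  assumes "finite E" "finite I"
  shows "(\<Sum>i\<in>I. cut_cost E c (F i)) = (\<Sum>e\<in>E. c e * card {i\<in>I. card (e \<inter> F i) = 1})"
proof -
  have "(\<Sum>i\<in>I. cut_cost E c (F i)) = (\<Sum>e\<in>E. \<Sum>i\<in>I. if card (e \<inter> F i) = 1 then c e else 0)"
    unfolding cut_cost_def using assms by (simp add: sum.inter_filter sum.swap[of _ I])
  also have "\<dots> = (\<Sum>e\<in>E. c e * card {i\<in>I. card (e \<inter> F i) = 1})"
    using assms(2) by (simp add: sum.inter_filter[symmetric] mult.commute)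
  finally show ?thesis .
qed

lemma sum_cut_cost_le_by_crossings:
  assumes "finite E" "\<forall>e\<in>E. 0 \<le> c e" "finite I" "finite J" "finite K"
    and "\<And>e. e \<in> E \<Longrightarrow> card {i\<in>I. card (e \<inter> A i) = 1} + card {j\<in>J. card (e \<inter> B j) = 1}
      \<le> card {k\<in>K. card (e \<inter> C k) = 1}"
  shows "(\<Sum>i\<in>I. cut_cost E c (A i)) + (\<Sum>j\<in>J. cut_cost E c (B j)) \<le> (\<Sum>k\<in>K. cut_cost E c (C k))"
proof -
  have "c e * card {i\<in>I. card (e \<inter> A i) = 1} + c e * card {j\<in>J. card (e \<inter> B j) = 1}
      \<le> c e * card {k\<in>K. card (e \<inter> C k) = 1}" if "e \<in> E" for e
  proof -
    have "real (card {i\<in>I. card (e \<inter> A i) = 1}) + card {j\<in>J. card (e \<inter> B j) = 1}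
        \<le> card {k\<in>K. card (e \<inter> C k) = 1}"
      using assms(6)[OF that] by linarith
    then show ?thesis
      using mult_left_mono assms(2) that by (fastforce simp: distrib_left[symmetric])
  qed
  then show ?thesis
    using assms(1,3-5) by (simp add: sum_cut_cost_eq sum.distrib[symmetric] sum_mono)
qed

definition covering_indices :: "'i set \<Rightarrow> ('i \<Rightarrow> 'a set) \<Rightarrow> 'a \<Rightarrow> 'i set" where
  "covering_indices S Q w = {s\<in>S. w \<in> Q s}"

definition exclusive_part :: "'a set \<Rightarrow> 'i set \<Rightarrow> ('i \<Rightarrow> 'a set) \<Rightarrow> 'i \<Rightarrow> 'a set" where
  "exclusive_part V S Q s = {w\<in>V. covering_indices S Q w = {s}}"

definition coverage_level :: "'a set \<Rightarrow> 'i set \<Rightarrow> ('i \<Rightarrow> 'a set) \<Rightarrow> nat \<Rightarrow> 'a set" where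
  "coverage_level V S Q j = {w\<in>V. j \<le> card (covering_indices S Q w)}"

lemma sum_cut_cost_exclusive_parts_coverage_levels_le:
  assumes "graph V E" "\<forall>e\<in>E. 0 \<le> c e" "finite S"
  shows "(\<Sum>s\<in>S. cut_cost E c (exclusive_part V S Q s))
      + (\<Sum>j\<in>{3..card S}. cut_cost E c (coverage_level V S Q j))
    \<le> (\<Sum>s\<in>S. cut_cost E c (Q s))"
proof (rule sum_cut_cost_le_by_crossings[OF graph_finite_edges[OF assms(1)] assms(2,3) _ assms(3)])
  fix e assume "e \<in> E"
  then obtain u v where uv: "u \<noteq> v" "e = {u, v}" "u \<in> V" "v \<in> V"
    using graph_edgeE[OF assms(1)] by blast
  have crosses: "card (e \<inter> X) = 1 \<longleftrightarrow> (u \<in> X) \<noteq> (v \<in> X)" for X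
    unfolding uv(2) by (rule card_doubleton_Int_eq_1_iff[OF uv(1)])
  let ?P = "covering_indices S Q"
  have "{s\<in>S. card (e \<inter> exclusive_part V S Q s) = 1} = {s. (?P u = {s}) \<noteq> (?P v = {s})}"
    unfolding crosses using uv(3,4) by (auto simp: exclusive_part_def covering_indices_def)
  moreover have "{j\<in>{3..card S}. card (e \<inter> coverage_level V S Q j) = 1}
      = {j\<in>{3..card S}. (j \<le> card (?P u)) \<noteq> (j \<le> card (?P v))}"
    unfolding crosses using uv(3,4) by (simp add: coverage_level_def)
  moreover have "{s\<in>S. card (e \<inter> Q s) = 1} = sym_diff (?P u) (?P v)"
    unfolding crosses by (auto simp: covering_indices_def)
  moreover have "finite (?P u)" "finite (?P v)"
    using assms(3) by (simp_all add: covering_indices_def)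
  ultimately show "card {s\<in>S. card (e \<inter> exclusive_part V S Q s) = 1}
      + card {j\<in>{3..card S}. card (e \<inter> coverage_level V S Q j) = 1}
    \<le> card {s\<in>S. card (e \<inter> Q s) = 1}"
    by (simp only: card_flips_le_card_sym_diff)
qed simp

lemma minimal_hitting_set_isolates:
  assumes "\<forall>Q\<in>\<C>. S \<inter> Q \<noteq> {}" "\<forall>S'. S' \<subset> S \<longrightarrow> \<not> (\<forall>Q\<in>\<C>. S' \<inter> Q \<noteq> {})" "s \<in> S"
  shows "\<exists>Q\<in>\<C>. S \<inter> Q = {s}"
proof -
  have "S - {s} \<subset> S"
    using assms(3) by blast
  then obtain Q where "Q \<in> \<C>" "(S - {s}) \<inter> Q = {}"
    using assms(2) by blast
  moreover have "S \<inter> Q \<noteq> {}"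
    using assms(1) \<open>Q \<in> \<C>\<close> by blast
  ultimately show ?thesis
    using assms(3) by blast
qed

lemma covering_indices_self:
  assumes "\<forall>t\<in>S. S \<inter> Q t = {t}" "s \<in> S"
  shows "covering_indices S Q s = {s}"
proof -
  have "s \<in> Q t \<longleftrightarrow> t = s" if "t \<in> S" for t
  proof -
    have "S \<inter> Q t = {t}"
      using assms(1) that by blast
    then show ?thesis
      using assms(2) by auto
  qed
  then show ?thesis
    using assms(2) unfolding covering_indices_def by auto
qed

lemma min_cut_value_le_exclusive_part:
  assumes "graph V E" "\<forall>t\<in>S. S \<inter> Q t = {t}" "S \<subseteq> V" "s \<in> S" "Q s \<subset> V"
  shows "min_cut_value V E c \<le> cut_cost E c (exclusive_part V S Q s)"
proof (rule min_cut_value_le[OF assms(1)])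
  have "s \<in> exclusive_part V S Q s"
    using covering_indices_self[OF assms(2,4)] assms(3,4) by (auto simp: exclusive_part_def)
  then show "exclusive_part V S Q s \<noteq> {}"
    by blast
  have "exclusive_part V S Q s \<subseteq> Q s"
    by (auto simp: exclusive_part_def covering_indices_def)
  then show "exclusive_part V S Q s \<subset> V"
    using assms(5) by blast
qed

lemma cut_cost_coverage_level_ge:
  assumes "graph V E" "U \<subseteq> V" "S \<subseteq> V"
    and "\<C> = {Q. Q \<subset> V \<and> V - U \<subset> Q \<and> cut_cost E c Q \<le> cut_cost E c U}"
    and "\<forall>Q\<in>\<C>. S \<inter> Q \<noteq> {}"
    and "\<forall>t\<in>S. S \<inter> Q t = {t}" "\<forall>t\<in>S. V - U \<subseteq> Q t"
    and "j \<in> {3..card S}"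
  shows "cut_cost E c U \<le> cut_cost E c (coverage_level V S Q j)" (is "_ \<le> cut_cost E c ?G")
proof -
  have "covering_indices S Q w = S" if "w \<in> V - U" for w
    using assms(7) that by (auto simp: covering_indices_def)
  then have "V - U \<subseteq> ?G"
    using assms(8) by (auto simp: coverage_level_def)
  moreover have "S \<inter> ?G = {}"
    using assms(6,8) covering_indices_self[OF assms(6)] by (auto simp: coverage_level_def)
  ultimately have "?G \<notin> \<C>"
    using assms(5) by blast
  show ?thesis
  proof (cases "?G = V - U")
    case True
    then show ?thesis
      using cut_cost_complement[OF assms(1), of c U] assms(2) by (simp add: double_diff)
  next
    case False
    obtain s where "s \<in> S"
      using assms(8) by fastforce
    then have "?G \<subset> V"
      using \<open>S \<inter> ?G = {}\<close> assms(3) by (auto simp: coverage_level_def)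
    moreover have "V - U \<subset> ?G"
      using False \<open>V - U \<subseteq> ?G\<close> by blast
    ultimately show ?thesis
      using \<open>?G \<notin> \<C>\<close> assms(4) by auto
  qed
qed

lemma card_minimal_hitting_set_mult_min_cut_value_le:
  assumes "graph V E" "\<forall>e\<in>E. 0 \<le> c e" "U \<subset> V"
    and "\<C> = {Q. Q \<subset> V \<and> V - U \<subset> Q \<and> cut_cost E c Q \<le> cut_cost E c U}"
    and "S \<subseteq> U" "\<forall>Q\<in>\<C>. S \<inter> Q \<noteq> {}" "\<forall>S'. S' \<subset> S \<longrightarrow> \<not> (\<forall>Q\<in>\<C>. S' \<inter> Q \<noteq> {})"
  shows "card S * min_cut_value V E c \<le> 2 * cut_cost E c U"
proof -
  obtain Q where Q: "\<And>s. s \<in> S \<Longrightarrow> Q s \<in> \<C> \<and> S \<inter> Q s = {s}"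
    using minimal_hitting_set_isolates[OF assms(6,7)] by metis
  have "finite S"
    using assms(1,3,5) unfolding graph_def by (meson finite_subset psubset_imp_subset)
  have "U \<subseteq> V" "S \<subseteq> V" and isolating: "\<forall>t\<in>S. S \<inter> Q t = {t}" "\<forall>t\<in>S. V - U \<subseteq> Q t"
    using Q assms(3-5) by auto
  note exclusive = min_cut_value_le_exclusive_part[OF assms(1) isolating(1) \<open>S \<subseteq> V\<close>]
  note levels = cut_cost_coverage_level_ge[OF assms(1) \<open>U \<subseteq> V\<close> \<open>S \<subseteq> V\<close> assms(4,6) isolating]
  have exclusive_sum: "card S * min_cut_value V E c \<le> (\<Sum>s\<in>S. cut_cost E c (exclusive_part V S Q s))"
    using sum_mono[of S "\<lambda>_. min_cut_value V E c"] exclusive Q assms(4) by auto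
  have "(real (card S) - 2) * cut_cost E c U \<le> card {3..card S} * cut_cost E c U"
    using cut_cost_nonneg[OF assms(2)] by (intro mult_right_mono) auto
  also have "\<dots> = (\<Sum>j\<in>{3..card S}. cut_cost E c U)"
    by simp
  also have "\<dots> \<le> (\<Sum>j\<in>{3..card S}. cut_cost E c (coverage_level V S Q j))"
    by (intro sum_mono levels)
  finally have "card S * min_cut_value V E c + (real (card S) - 2) * cut_cost E c U
      \<le> (\<Sum>s\<in>S. cut_cost E c (exclusive_part V S Q s))
        + (\<Sum>j\<in>{3..card S}. cut_cost E c (coverage_level V S Q j))"
    by (rule add_mono[OF exclusive_sum])
  also have "\<dots> \<le> (\<Sum>s\<in>S. cut_cost E c (Q s))"
    by (rule sum_cut_cost_exclusive_parts_coverage_levels_le[OF assms(1,2) \<open>finite S\<close>])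
  also have "\<dots> \<le> card S * cut_cost E c U"
    using sum_mono[of S "\<lambda>s. cut_cost E c (Q s)" "\<lambda>_. cut_cost E c U"] Q assms(4) by auto
  finally show ?thesis
    by (simp add: left_diff_distrib)
qed

theorem lemma2p3:
  fixes V :: "'a set" and E :: "'a set set" and c :: "'a set \<Rightarrow> real"
    and \<alpha> :: real and U S :: "'a set" and \<C> :: "'a set set"
  assumes "connected_graph V E"
    and "\<forall>e\<in>E. c e > 0"
    and "\<alpha> \<ge> 1"
    and "approx_min_cut V E c \<alpha> U"
    and "\<C> = {Q. Q \<subset> V \<and> V - U \<subset> Q \<and> cut_cost E c Q \<le> cut_cost E c U}"
    and "\<C> \<noteq> {}"
    and "S \<subseteq> U" and "\<forall>Q\<in>\<C>. S \<inter> Q \<noteq> {}"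
    and "\<forall>S'. S' \<subset> S \<longrightarrow> \<not> (\<forall>Q\<in>\<C>. S' \<inter> Q \<noteq> {})"
  shows "real (card S) \<le> of_int \<lfloor>2 * \<alpha>\<rfloor> + 1"
proof -
  have graph: "graph V E"
    using assms(1) unfolding connected_graph_def by simp
  have nonneg: "\<forall>e\<in>E. 0 \<le> c e"
    using assms(2) by (simp add: less_imp_le)
  have "U \<noteq> {}" "U \<subset> V" and approx: "cut_cost E c U \<le> \<alpha> * min_cut_value V E c"
    using assms(4) unfolding approx_min_cut_def by auto
  have "card S * min_cut_value V E c \<le> 2 * cut_cost E c U"
    using card_minimal_hitting_set_mult_min_cut_value_le[OF graph nonneg \<open>U \<subset> V\<close> assms(5,7-9)] .
  also have "\<dots> \<le> (2 * \<alpha>) * min_cut_value V E c"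
    using approx by simp
  finally have "card S \<le> 2 * \<alpha>"
    using min_cut_value_pos[OF assms(1,2) \<open>U \<noteq> {}\<close> \<open>U \<subset> V\<close>] by simp
  then show ?thesis
    using real_of_int_floor_add_one_gt[of "2 * \<alpha>"] by linarith
qed

end
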